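(* Consider a Moksha-Patam board with a chute-barrier of $\lambda\ge 6$ chutes whose entrances are the cells $M+1,M+2,\dots,M+\lambda$. Set $m_1=M+1$ and let $m_2$ be the lowest exit among the chutes of this chute-barrier. Inductively, for $i\ge 2$, let $m_{i+1}$ be the lowest exit among the chutes whose entrance lies in $\{m_i+1,m_i+2,\dots,m_{i-1}-1\}$, or $m_{i+1}=m_i$ if there is no such chute or if this lowest exit exceeds $m_i$. Let $m=\min\{m_i: i\in\mathbb N\}$ and $C=\{m,m+1,\dots,M\}$. Then $C$ is not closed if and only if there is a ladder whose entrance $\ell$ lies in $C$ and whose exit $L$ satisfies $L>M+\lambda$.
   Context: A Moksha-Patam board consists of the cells $1,\dots,100$ together with a finite set of components; a component is an ordered pair $(a,b)$ of distinct cells, $a$ being its entrance and $b$ its exit; it is a ladder if $a<b$ and a chute if $a>b$. Conventions: distinct components have distinct entrances; no cell is both an entrance and an exit; cells $1$ and $100$ are neither entrances nor exits (components may share exits). The associated Markov chain has state space $\{1,\dots,100\}$ and transition probabilities defined as follows: $p_{100,100}=1$; for $i<100$ and each die value $d\in\{1,\dots,6\}$ (each with probability $1/6$), if $i+d>100$ the chain stays at $i$; otherwise, with $j=i+d$, the chain moves to $b$ if $j$ is the entrance of a component $(j,b)$ and to $j$ otherwise. A set $C$ of states is closed if $p_{ij}=0$ for all $i\in C$, $j\notin C$. A chute-barrier is a collection of six or more chutes whose entrances are consecutive cells. *)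

theory Defs
  imports Main "HOL-Library.Extended_Nat"
begin

text \<open>A board is given by its set of components (entrance, exit), cells are 1..100.\<close>

definition cells :: "nat set" where
  "cells = {1..100}"

definition valid_board :: "(nat \<times> nat) set \<Rightarrow> bool" where
  "valid_board comps \<longleftrightarrow>
     finite comps \<and>
     (\<forall>(a,b)\<in>comps. a \<noteq> b \<and> a \<in> cells \<and> b \<in> cells) \<and>
     (\<forall>(a,b)\<in>comps. \<forall>(a',b')\<in>comps. a = a' \<longrightarrow> b = b') \<and>
     fst ` comps \<inter> snd ` comps = {} \<and>
     1 \<notin> fst ` comps \<union> snd ` comps \<and>
     100 \<notin> fst ` comps \<union> snd ` comps"

definition is_ladder :: "nat \<times> nat \<Rightarrow> bool" where
  "is_ladder c \<longleftrightarrow> fst c < snd c"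

definition is_chute :: "nat \<times> nat \<Rightarrow> bool" where
  "is_chute c \<longleftrightarrow> fst c > snd c"

definition land :: "(nat \<times> nat) set \<Rightarrow> nat \<Rightarrow> nat" where
  "land comps j = (if \<exists>b. (j,b) \<in> comps then (THE b. (j,b) \<in> comps) else j)"

definition move :: "(nat \<times> nat) set \<Rightarrow> nat \<Rightarrow> nat \<Rightarrow> nat" where
  "move comps i d = (if i + d > 100 then i else land comps (i + d))"

definition trans_prob :: "(nat \<times> nat) set \<Rightarrow> nat \<Rightarrow> nat \<Rightarrow> real" where
  "trans_prob comps i j =
     (if i = 100 then (if j = 100 then 1 else 0)
      else real (card {d \<in> {1..6::nat}. move comps i d = j}) / 6)"

definition closed_set :: "(nat \<times> nat) set \<Rightarrow> nat set \<Rightarrow> bool" where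
  "closed_set comps C \<longleftrightarrow>
     (\<forall>i\<in>C. \<forall>j\<in>cells - C. trans_prob comps i j = 0)"

text \<open>Lowest exit among chutes with entrance strictly between lo and hi; the step of the
  recursion for m_(i+1) from m_i (= cur) and m_(i-1) (= prev).\<close>
definition mstep :: "(nat \<times> nat) set \<Rightarrow> nat \<Rightarrow> nat \<Rightarrow> nat" where
  "mstep comps cur prev =
     (let S = {b. \<exists>a. (a,b) \<in> comps \<and> is_chute (a,b) \<and> cur < a \<and> a < prev}
      in if S = {} \<or> Min S > cur then cur else Min S)"

text \<open>mseq comps M lam n = m_(n+1).\<close>
fun mseq :: "(nat \<times> nat) set \<Rightarrow> nat \<Rightarrow> nat \<Rightarrow> nat \<Rightarrow> nat" where
  "mseq comps M lam 0 = M + 1"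
| "mseq comps M lam (Suc 0) =
     Min {b. \<exists>a. (a,b) \<in> comps \<and> is_chute (a,b) \<and> a \<in> {M+1..M+lam}}"
| "mseq comps M lam (Suc (Suc n)) =
     mstep comps (mseq comps M lam (Suc n)) (mseq comps M lam n)"

end

theory Submission
  imports Defs
begin

text \<open>The values \<open>m\<^sub>i\<close> (\<open>i \<ge> 2\<close>) are chute exits, so \<open>m\<close> is not an entrance. The
  interval \<open>C = [m, M]\<close> can only be left by a move that lands on a component entrance. Landing
  in the barrier leads to a chute exit \<open>\<ge> m\<^sub>2 \<ge> m\<close>, which lies below the barrier. A chute
  entering at \<open>a \<in> (m, M]\<close> is considered by the recursion: the sequence \<open>m\<^sub>i\<close> first drops
  below \<open>a\<close> at some step, after which the next value is at most the exit of that chute, so the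
  exit is \<open>\<ge> m\<close>. Hence only a ladder can leave \<open>C\<close>, and since exits are not entrances its exit
  must overshoot the barrier. Conversely such a ladder at \<open>l \<noteq> m\<close> is reached from \<open>l - 1 \<in> C\<close>
  by rolling a one.\<close>

lemma valid_board_finite: "valid_board comps \<Longrightarrow> finite comps"
  unfolding valid_board_def by (elim conjE)

lemma valid_board_component:
  "valid_board comps \<Longrightarrow> (a, b) \<in> comps \<Longrightarrow> a \<noteq> b \<and> a \<in> cells \<and> b \<in> cells"
  unfolding valid_board_def by auto

lemma valid_board_exit_unique:
  "valid_board comps \<Longrightarrow> (a, b) \<in> comps \<Longrightarrow> (a, b') \<in> comps \<Longrightarrow> b = b'"
  unfolding valid_board_def by auto

lemma valid_board_exit_not_entrance:
  assumes "valid_board comps" "b \<in> snd ` comps"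
  shows "(b, c) \<notin> comps"
proof
  assume "(b, c) \<in> comps"
  then have "b \<in> fst ` comps \<inter> snd ` comps" using assms(2) by force
  with assms(1) show False unfolding valid_board_def by simp
qed

lemma land_entrance: "valid_board comps \<Longrightarrow> (j, b) \<in> comps \<Longrightarrow> land comps j = b"
  unfolding land_def by (auto intro: the_equality dest: valid_board_exit_unique)

lemma land_not_entrance: "(\<forall>b. (j, b) \<notin> comps) \<Longrightarrow> land comps j = j"
  unfolding land_def by auto

lemma move_in_cells:
  assumes "valid_board comps" "i \<in> cells"
  shows "move comps i d \<in> cells"
proof (cases "\<exists>b. (i + d, b) \<in> comps")
  case True
  then show ?thesis
    using assms by (auto simp: move_def land_entrance dest: valid_board_component)
qed (use assms in \<open>auto simp: move_def land_not_entrance cells_def\<close>)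

lemma closed_set_iff_moves:
  assumes "valid_board comps" "C \<subseteq> cells" "100 \<notin> C"
  shows "closed_set comps C \<longleftrightarrow> (\<forall>i\<in>C. \<forall>d\<in>{1..6}. move comps i d \<in> C)"
proof -
  have "trans_prob comps i j = 0 \<longleftrightarrow> (\<forall>d\<in>{1..6}. move comps i d \<noteq> j)" if "i \<in> C" for i j
    using that assms(3) by (auto simp: trans_prob_def)
  then show ?thesis
    unfolding closed_set_def using assms move_in_cells by blast
qed

lemma finite_exits: "valid_board comps \<Longrightarrow> finite {b. \<exists>a. (a, b) \<in> comps \<and> P a b}"
proof (rule finite_subset)
  show "{b. \<exists>a. (a, b) \<in> comps \<and> P a b} \<subseteq> snd ` comps" by force
qed (intro finite_imageI valid_board_finite)

lemma mstep_le_chute_exit: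
  assumes "valid_board comps" "(a, b) \<in> comps" "is_chute (a, b)" "cur < a" "a < prev"
  shows "mstep comps cur prev \<le> b"
proof -
  let ?S = "{b. \<exists>a. (a, b) \<in> comps \<and> is_chute (a, b) \<and> cur < a \<and> a < prev}"
  have fin: "finite ?S" by (rule finite_exits[OF assms(1)])
  have bS: "b \<in> ?S" using assms by auto
  have "Min ?S \<le> b" using Min_le[OF fin bS] .
  thus ?thesis unfolding mstep_def Let_def using bS by auto
qed

lemma mstep_in_exits:
  assumes "valid_board comps" "cur \<in> snd ` comps"
  shows "mstep comps cur prev \<in> snd ` comps"
proof -
  let ?S = "{b. \<exists>a. (a, b) \<in> comps \<and> is_chute (a, b) \<and> cur < a \<and> a < prev}"
  have fin: "finite ?S" by (rule finite_exits[OF assms(1)])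
  show ?thesis unfolding mstep_def Let_def
    using assms(2) Min_in[OF fin] by force
qed

locale chute_barrier =
  fixes comps :: "(nat \<times> nat) set" and M lam :: nat
  assumes valid: "valid_board comps"
    and lam_ge_6: "lam \<ge> 6"
    and barrier: "\<forall>k\<in>{1..lam}. \<exists>b. (M + k, b) \<in> comps \<and> is_chute (M + k, b)"
begin

definition mmin :: nat where
  "mmin = (LEAST x. x \<in> range (mseq comps M lam))"

lemma barrier_chute:
  assumes "a \<in> {M+1..M+lam}"
  obtains b where "(a, b) \<in> comps" "is_chute (a, b)"
proof -
  have "a - M \<in> {1..lam}" "M + (a - M) = a" using assms by auto
  then show ?thesis using barrier that by metis
qed

lemma barrier_le_100: "M + lam \<le> 100"
proof -
  obtain b where "(M + lam, b) \<in> comps"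
    using barrier_chute[of "M + lam"] lam_ge_6 by auto
  then show ?thesis using valid_board_component[OF valid] by (auto simp: cells_def)
qed

lemma mseq_1_le_barrier_exit:
  assumes "(a, b) \<in> comps" "is_chute (a, b)" "a \<in> {M+1..M+lam}"
  shows "mseq comps M lam 1 \<le> b"
proof -
  let ?S = "{b. \<exists>a. (a, b) \<in> comps \<and> is_chute (a, b) \<and> a \<in> {M+1..M+lam}}"
  have fin: "finite ?S" by (rule finite_exits[OF valid])
  have "b \<in> ?S" using assms by blast
  then show ?thesis using Min_le[OF fin] by simp
qed

lemma mseq_1_in_exits: "mseq comps M lam 1 \<in> snd ` comps"
proof -
  let ?S = "{b. \<exists>a. (a, b) \<in> comps \<and> is_chute (a, b) \<and> a \<in> {M+1..M+lam}}"
  have fin: "finite ?S" by (rule finite_exits[OF valid])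
  obtain b where "(M + 1, b) \<in> comps" "is_chute (M + 1, b)"
    using barrier_chute[of "M + 1"] lam_ge_6 by auto
  then have "b \<in> ?S" using lam_ge_6 by auto
  then have "Min ?S \<in> ?S" using Min_in[OF fin] by blast
  then show ?thesis by force
qed

lemma mseq_Suc_in_exits: "mseq comps M lam (Suc n) \<in> snd ` comps"
proof (induction n rule: less_induct)
  case (less n)
  show ?case
  proof (cases n)
    case 0
    then show ?thesis using mseq_1_in_exits by simp
  next
    case (Suc k)
    then show ?thesis using less mstep_in_exits[OF valid] by simp
  qed
qed

lemma mmin_le: "mmin \<le> mseq comps M lam n"
  unfolding mmin_def by (rule Least_le) simp

lemma mmin_in_range: "mmin \<in> range (mseq comps M lam)"
  unfolding mmin_def by (rule LeastI[of _ "mseq comps M lam 0"]) (rule rangeI)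

lemma barrier_not_exit:
  assumes "(a, b) \<in> comps"
  shows "b \<notin> {M+1..M+lam}"
proof
  assume "b \<in> {M+1..M+lam}"
  then obtain c where "(b, c) \<in> comps" by (rule barrier_chute)
  moreover have "b \<in> snd ` comps" using assms by force
  ultimately show False using valid_board_exit_not_entrance[OF valid] by blast
qed

lemma barrier_exit_in_interval:
  assumes "(a, b) \<in> comps" "is_chute (a, b)" "a \<in> {M+1..M+lam}"
  shows "b \<in> {mmin..M}"
proof -
  have "b \<notin> {M+1..M+lam}" using barrier_not_exit[OF assms(1)] .
  moreover have "b < M + lam" using assms(2,3) by (simp add: is_chute_def)
  moreover have "mmin \<le> b" using mmin_le[of 1] mseq_1_le_barrier_exit[OF assms] by simp
  ultimately show ?thesis by auto
qed

lemma mmin_le_M: "mmin \<le> M"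
proof -
  obtain b where "(M + 1, b) \<in> comps" "is_chute (M + 1, b)"
    using barrier_chute[of "M + 1"] lam_ge_6 by auto
  then show ?thesis using barrier_exit_in_interval lam_ge_6 by fastforce
qed

lemma mmin_in_exits: "mmin \<in> snd ` comps"
proof -
  obtain j where j: "mmin = mseq comps M lam j" using mmin_in_range by auto
  have "j \<noteq> 0"
  proof
    assume "j = 0"
    with j mmin_le_M show False by simp
  qed
  with j show ?thesis using mseq_Suc_in_exits by (cases j) auto
qed

lemma chute_exit_ge_mmin:
  assumes ab: "(a, b) \<in> comps" "is_chute (a, b)" and a: "mmin < a" "a \<le> M"
  shows "mmin \<le> b"
proof -
  \<comment> \<open>the first index at which the sequence drops below \<open>a\<close>; its predecessor lies above \<open>a\<close>\<close>
  define n where "n = (LEAST n. mseq comps M lam n < a)"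
  obtain j where "mseq comps M lam j = mmin" using mmin_in_range by auto
  with a(1) have "mseq comps M lam j < a" by linarith
  then have below: "mseq comps M lam n < a" unfolding n_def by (rule LeastI)
  have "n \<noteq> 0"
  proof
    assume "n = 0"
    with below a(2) show False by simp
  qed
  then obtain p where p: "n = Suc p" by (cases n) auto
  have "\<not> mseq comps M lam p < a"
  proof
    assume "mseq comps M lam p < a"
    then have "n \<le> p" unfolding n_def by (rule Least_le)
    with p show False by simp
  qed
  moreover have "mseq comps M lam p \<noteq> a"
  proof (cases p)
    case 0
    with a(2) show ?thesis by simp
  next
    case (Suc q)
    then have "(mseq comps M lam p, b) \<notin> comps"
      using valid_board_exit_not_entrance[OF valid mseq_Suc_in_exits] by simp
    with ab(1) show ?thesis by auto
  qed
  ultimately have above: "a < mseq comps M lam p" by simp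
  have "mseq comps M lam (Suc (Suc p)) \<le> b"
    using mstep_le_chute_exit[OF valid ab] below above p by simp
  then show ?thesis using mmin_le[of "Suc (Suc p)"] by simp
qed

lemma escaping_move:
  assumes i: "i \<in> {mmin..M}" and d: "d \<in> {1..6}" and escape: "move comps i d \<notin> {mmin..M}"
  shows "(i + d, move comps i d) \<in> comps \<and> is_ladder (i + d, move comps i d)
    \<and> i + d \<in> {mmin..M} \<and> M + lam < move comps i d"
proof -
  have j: "i + d \<le> M + lam" "mmin < i + d" "i + d \<le> 100"
    using i d lam_ge_6 barrier_le_100 by auto
  then have move: "move comps i d = land comps (i + d)" by (simp add: move_def)
  show ?thesis
  proof (cases "i + d \<le> M")
    case below: True
    have "\<exists>b. (i + d, b) \<in> comps"
    proof (rule ccontr)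
      assume "\<nexists>b. (i + d, b) \<in> comps"
      then have "land comps (i + d) = i + d" by (intro land_not_entrance) simp
      then have "move comps i d = i + d" using move by simp
      with escape below j(2) show False by simp
    qed
    then obtain b where b: "(i + d, b) \<in> comps" ..
    then have mb: "move comps i d = b" using land_entrance[OF valid] move by simp
    have "\<not> is_chute (i + d, b)"
    proof
      assume "is_chute (i + d, b)"
      then have "b \<in> {mmin..M}"
        using chute_exit_ge_mmin[OF b _ j(2) below] below by (simp add: is_chute_def)
      with escape mb show False by simp
    qed
    then have ladder: "is_ladder (i + d, b)"
      using valid_board_component[OF valid b] by (simp add: is_chute_def is_ladder_def)
    have "M + lam < b"
      using barrier_not_exit[OF b] escape ladder j(2) by (auto simp: mb is_ladder_def)
    then show ?thesis using b ladder below j(2) mb by simp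
  next
    case False
    obtain b where b: "(i + d, b) \<in> comps" "is_chute (i + d, b)"
      by (rule barrier_chute[of "i + d"]) (use False j(1) in auto)
    then have "move comps i d \<in> {mmin..M}"
      using barrier_exit_in_interval False j(1) land_entrance[OF valid b(1)] move by simp
    with escape show ?thesis by contradiction
  qed
qed

lemma ladder_escapes:
  assumes "(l, L) \<in> comps" "l \<in> {mmin..M}" "M + lam < L"
  shows "l - 1 \<in> {mmin..M}" "move comps (l - 1) 1 \<notin> {mmin..M}"
proof -
  have "l \<noteq> mmin"
    using valid_board_exit_not_entrance[OF valid mmin_in_exits] assms(1) by blast
  then show l1: "l - 1 \<in> {mmin..M}" using assms(2) by auto
  have "l - 1 + 1 = l" using \<open>l \<noteq> mmin\<close> assms(2) by simp
  then have "move comps (l - 1) 1 = L"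
    using assms(2) barrier_le_100 lam_ge_6 land_entrance[OF valid assms(1)]
    by (simp add: move_def)
  then show "move comps (l - 1) 1 \<notin> {mmin..M}" using assms(3) by simp
qed

lemma not_closed_iff_escaping_ladder:
  "\<not> closed_set comps {mmin..M} \<longleftrightarrow>
     (\<exists>l L. (l, L) \<in> comps \<and> is_ladder (l, L) \<and> l \<in> {mmin..M} \<and> L > M + lam)"
proof -
  obtain a where "(a, mmin) \<in> comps" using mmin_in_exits by auto
  then have "mmin \<ge> 1" using valid_board_component[OF valid] by (simp add: cells_def)
  then have "{mmin..M} \<subseteq> cells" "100 \<notin> {mmin..M}"
    using barrier_le_100 lam_ge_6 by (auto simp: cells_def)
  note closed = closed_set_iff_moves[OF valid this]
  show ?thesis
  proof
    assume "\<not> closed_set comps {mmin..M}"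
    then obtain i d where "i \<in> {mmin..M}" "d \<in> {1..6}" "move comps i d \<notin> {mmin..M}"
      unfolding closed by blast
    from escaping_move[OF this] show "\<exists>l L. (l, L) \<in> comps \<and> is_ladder (l, L)
      \<and> l \<in> {mmin..M} \<and> L > M + lam" by blast
  next
    assume "\<exists>l L. (l, L) \<in> comps \<and> is_ladder (l, L) \<and> l \<in> {mmin..M} \<and> L > M + lam"
    then obtain l L where "(l, L) \<in> comps" "l \<in> {mmin..M}" "M + lam < L" by blast
    from ladder_escapes[OF this] show "\<not> closed_set comps {mmin..M}"
      unfolding closed by force
  qed
qed

end

theorem mainTheorem8:
  fixes comps :: "(nat \<times> nat) set" and M lam :: nat
  assumes "valid_board comps"
    and "lam \<ge> 6"
    and "\<forall>k\<in>{1..lam}. \<exists>b. (M + k, b) \<in> comps \<and> is_chute (M + k, b)"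
  shows "\<not> closed_set comps {(LEAST x. x \<in> range (mseq comps M lam))..M}
     \<longleftrightarrow> (\<exists>l L. (l, L) \<in> comps \<and> is_ladder (l, L)
               \<and> l \<in> {(LEAST x. x \<in> range (mseq comps M lam))..M} \<and> L > M + lam)"
proof -
  interpret chute_barrier comps M lam using assms by unfold_locales
  show ?thesis using not_closed_iff_escaping_ladder unfolding mmin_def .
qed

end
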